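(* Let $\chi:\mathcal H\to\mathcal H_L^\chi\otimes\mathcal H_R^\chi$ be a splitting map and let $\{\pi_i\}_{i\in I}$ be the atomic projectors of $\mathcal Z(\mathrm{stloc}_L(\chi))$. Set $\mathcal H_i=\pi_i\mathcal H$ and $\chi_i=\chi\pi_i:\mathcal H\to\mathcal H_L^\chi\otimes\mathcal H_R^\chi$. Then: (1) $\mathcal H=\bigoplus_i\mathcal H_i$; (2) $\chi=\sum_i\chi_i=\sum_i(\chi_i)|_{\mathcal H_i}$; (3) for every $i$, $(\chi_i)|_{\mathcal H_i}$ is a splitting map on $\mathcal H_i$; (4) its algebra of strictly left-local operators, viewed as a subalgebra of $\mathcal L(\mathcal H)$, equals $\pi_i\,\mathrm{stloc}_L(\chi)$, and is thus a factor; (5) there exists a family $\{\mathcal H_L^i\}_{i\in I}$ of pairwise orthogonal subspaces of $\mathcal H_L^\chi$ such that $\mathrm{Im}(\chi_i)\subseteq\mathcal H_L^i\otimes\mathcal H_R^\chi$ for every $i$.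
   Context: All Hilbert spaces are finite-dimensional and complex. A splitting map on $\mathcal H$ is an isometry $\chi:\mathcal H\to\mathcal H_L^\chi\otimes\mathcal H_R^\chi$. $A\in\mathcal L(\mathcal H)$ is strictly left $\chi$-local if there is $\tilde A\in\mathcal L(\mathcal H_L^\chi)$ with $A\chi^\dagger=\chi^\dagger(\tilde A\otimes\mathbb 1)$ and $\chi A=(\tilde A\otimes\mathbb 1)\chi$; $\mathrm{stloc}_L(\chi)$ is the set of these, a Von Neumann algebra (unital $*$-subalgebra of $\mathcal L(\mathcal H)$). For a Von Neumann algebra $\mathcal C$, $\mathcal Z(\mathcal C)=\mathcal C\cap\mathcal C'$ is its centre; a commutative Von Neumann algebra $\mathcal Z$ has a unique family of nonzero, self-adjoint, pairwise orthogonal projectors ($\pi_i\pi_j=\delta_{ij}\pi_i$) spanning $\mathcal Z$, called its atomic projectors (they sum to the identity). A Von Neumann algebra is a factor if its centre consists of scalar multiples of its identity. Operators on $\mathcal H_i$ are viewed as operators on $\mathcal H$ by extending them by $0$ on $\mathcal H_i^\perp$. *)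

theory Defs
  imports Complex_Main "Jordan_Normal_Form.Matrix"
begin

text \<open>Finite-dimensional complex Hilbert spaces are modelled concretely:
  H = C^n, H_L = C^a, H_R = C^b, and H_L (x) H_R = C^(a*b), where the basis
  vector e_k (x) f_l of the tensor product has index k*b + l.\<close>

definition adj :: "complex mat \<Rightarrow> complex mat" where
  "adj A = mat (dim_col A) (dim_row A) (\<lambda>(i,j). cnj (A $$ (j,i)))"

definition kron :: "complex mat \<Rightarrow> complex mat \<Rightarrow> complex mat" where
  "kron A B = mat (dim_row A * dim_row B) (dim_col A * dim_col B)
     (\<lambda>(i,j). A $$ (i div dim_row B, j div dim_col B) * B $$ (i mod dim_row B, j mod dim_col B))"

definition msum :: "nat \<Rightarrow> nat \<Rightarrow> 'i set \<Rightarrow> ('i \<Rightarrow> complex mat) \<Rightarrow> complex mat" where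
  "msum r c F f = mat r c (\<lambda>(i,j). \<Sum>k\<in>F. f k $$ (i,j))"

definition mat_range :: "complex mat \<Rightarrow> complex vec set" where
  "mat_range M = {M *\<^sub>v v | v. v \<in> carrier_vec (dim_col M)}"

definition is_proj :: "nat \<Rightarrow> complex mat \<Rightarrow> bool" where
  "is_proj n P \<longleftrightarrow> P \<in> carrier_mat n n \<and> adj P = P \<and> P * P = P"

text \<open>A splitting map on the subspace H_P = P C^n (P an orthogonal projector on C^n)
  with target C^a (x) C^b, viewed (by the convention of extending by 0 on the
  orthogonal complement of H_P) as an (a*b) x n matrix X: X vanishes on the
  complement of H_P and is isometric on H_P.\<close>
definition splitting_on :: "nat \<Rightarrow> nat \<Rightarrow> nat \<Rightarrow> complex mat \<Rightarrow> complex mat \<Rightarrow> bool" where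
  "splitting_on n a b P X \<longleftrightarrow> is_proj n P \<and> X \<in> carrier_mat (a*b) n \<and> X * P = X \<and> adj X * X = P"

abbreviation splitting :: "nat \<Rightarrow> nat \<Rightarrow> nat \<Rightarrow> complex mat \<Rightarrow> bool" where
  "splitting n a b X \<equiv> splitting_on n a b (1\<^sub>m n) X"

text \<open>Strictly left X-local operators on H_P, viewed as operators on C^n
  (extended by 0 on the complement of H_P).\<close>
definition stloc_on :: "nat \<Rightarrow> nat \<Rightarrow> nat \<Rightarrow> complex mat \<Rightarrow> complex mat \<Rightarrow> complex mat set" where
  "stloc_on n a b P X = {A \<in> carrier_mat n n. P * A * P = A \<and>
     (\<exists>At \<in> carrier_mat a a. A * adj X = adj X * kron At (1\<^sub>m b) \<and> X * A = kron At (1\<^sub>m b) * X)}"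

abbreviation stloc :: "nat \<Rightarrow> nat \<Rightarrow> nat \<Rightarrow> complex mat \<Rightarrow> complex mat set" where
  "stloc n a b X \<equiv> stloc_on n a b (1\<^sub>m n) X"

definition centre :: "complex mat set \<Rightarrow> complex mat set" where
  "centre C = {A \<in> C. \<forall>B \<in> C. A * B = B * A}"

definition atomic_projectors :: "nat \<Rightarrow> complex mat set \<Rightarrow> 'i set \<Rightarrow> ('i \<Rightarrow> complex mat) \<Rightarrow> bool" where
  "atomic_projectors n Z I p \<longleftrightarrow> finite I \<and>
     (\<forall>i\<in>I. p i \<in> carrier_mat n n \<and> p i \<noteq> 0\<^sub>m n n \<and> adj (p i) = p i) \<and>
     (\<forall>i\<in>I. \<forall>j\<in>I. p i * p j = (if i = j then p i else 0\<^sub>m n n)) \<and>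
     Z = {msum n n I (\<lambda>i. c i \<cdot>\<^sub>m p i) | c. True}"

definition is_factor :: "complex mat \<Rightarrow> complex mat set \<Rightarrow> bool" where
  "is_factor P C \<longleftrightarrow> centre C = {c \<cdot>\<^sub>m P | c. True}"

end

theory Submission
  imports Defs
begin

(* Since the identity is central in stloc_L(chi), expanding it in the atomic projectors gives
   sum_i p_i = 1, whence (1) and (2); (3) holds for every orthogonal projector.  Compressing by a
   central projector P identifies the strictly local operators of chi P with P stloc_L(chi), whose
   centre is P Z(stloc_L(chi)); for P = p_i atomic this is C p_i, which gives (4).
   For (5), locality of p_i provides T_i with (T_i (x) 1) chi = chi p_i = (T_i^* (x) 1) chi.  Regard
   chi p_j as a map into H_L by moving H_R to the input side: T_i fixes the range of chi p_i and
   T_i^* annihilates the range of chi p_j for j ~= i, so these ranges are pairwise orthogonal and the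
   orthogonal projectors onto them form the required family. *)

section \<open>Adjoints and tensoring with the identity\<close>

lemma adj_carrier [simp]: "A \<in> carrier_mat r c \<Longrightarrow> adj A \<in> carrier_mat c r"
  by (auto simp: adj_def)

lemma adj_dim [simp]: "dim_row (adj A) = dim_col A" "dim_col (adj A) = dim_row A"
  by (auto simp: adj_def)

lemma adj_index [simp]: "i < dim_col A \<Longrightarrow> j < dim_row A \<Longrightarrow> adj A $$ (i,j) = cnj (A $$ (j,i))"
  by (auto simp: adj_def)

lemma adj_adj [simp]: "adj (adj A) = A"
  by (rule eq_matI) auto

lemma adj_zero [simp]: "adj (0\<^sub>m r c) = 0\<^sub>m c r"
  by (rule eq_matI) auto

lemma adj_add: "A \<in> carrier_mat r c \<Longrightarrow> B \<in> carrier_mat r c \<Longrightarrow> adj (A + B) = adj A + adj B"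
  by (intro eq_matI) auto

lemma adj_smult [simp]: "adj (x \<cdot>\<^sub>m A) = cnj x \<cdot>\<^sub>m adj A"
  by (intro eq_matI) auto

lemma adj_mult:
  assumes "A \<in> carrier_mat r k" "B \<in> carrier_mat k c"
  shows "adj (A * B) = adj B * adj A"
  using assms by (intro eq_matI) (auto simp: scalar_prod_def mult.commute)

lemma adj_mult_hermitian:
  assumes "A \<in> carrier_mat r n" "P \<in> carrier_mat n n" "adj P = P"
  shows "adj (A * P) = P * adj A"
  using adj_mult[OF assms(1,2)] assms(3) by simp

lemma mult_assoc_dim:
  fixes A B C :: "'a :: comm_ring_1 mat"
  shows "dim_col A = dim_row B \<Longrightarrow> dim_col B = dim_row C \<Longrightarrow> A * B * C = A * (B * C)"
  by (rule assoc_mult_mat[of A "dim_row A" "dim_col A" B "dim_col B" C "dim_col C"]) auto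

lemma sum_lessThan_mult_split:
  fixes f :: "nat \<Rightarrow> 'a :: comm_monoid_add"
  shows "(\<Sum>s<a*b. f s) = (\<Sum>r<a. \<Sum>l<b. f (r*b + l))"
proof (induction a)
  case (Suc a)
  let ?R = "(\<lambda>l. a*b + l) ` {..<b}"
  have split: "{..<Suc a * b} = {..<a*b} \<union> ?R"
  proof (intro equalityI subsetI)
    fix x assume "x \<in> {..<Suc a * b}"
    then show "x \<in> {..<a*b} \<union> ?R"
      by (cases "x < a*b") (auto simp: image_iff intro!: bexI[of _ "x - a*b"])
  qed auto
  have "(\<Sum>s<Suc a * b. f s) = (\<Sum>s<a*b. f s) + (\<Sum>s\<in>?R. f s)"
    unfolding split by (rule sum.union_disjoint) auto
  also have "(\<Sum>s\<in>?R. f s) = (\<Sum>l<b. f (a*b + l))"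
    by (simp add: sum.reindex)
  finally show ?case
    using Suc by (simp add: mult.commute)
qed simp

lemma mult_add_lt_mult:
  assumes "r < a" "l < b" shows "r*b + l < a*(b::nat)"
proof -
  have "r*b + l < Suc r * b" using assms(2) by simp
  also have "\<dots> \<le> a*b" using assms(1) by (intro mult_le_mono1) simp
  finally show ?thesis .
qed

abbreviation tensor_one :: "nat \<Rightarrow> complex mat \<Rightarrow> complex mat" where
  "tensor_one b A \<equiv> kron A (1\<^sub>m b)"

lemma kron_dim [simp]:
  "dim_row (kron A B) = dim_row A * dim_row B" "dim_col (kron A B) = dim_col A * dim_col B"
  by (auto simp: kron_def)

lemma tensor_one_carrier [simp]: "A \<in> carrier_mat a a \<Longrightarrow> tensor_one b A \<in> carrier_mat (a*b) (a*b)"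
  by auto

lemma tensor_one_index:
  assumes "A \<in> carrier_mat a a" "i < a*b" "j < a*b"
  shows "tensor_one b A $$ (i,j) = (if i mod b = j mod b then A $$ (i div b, j div b) else 0)"
proof -
  have "b > 0" using assms by (cases b) auto
  then show ?thesis using assms by (auto simp: kron_def)
qed

lemma tensor_one_mult_index:
  assumes M: "M \<in> carrier_mat a a" and Y: "Y \<in> carrier_mat (a*b) m" and i: "i < a*b" and j: "j < m"
  shows "(tensor_one b M * Y) $$ (i,j) = (\<Sum>r<a. M $$ (i div b, r) * Y $$ (r*b + i mod b, j))"
proof -
  have b: "b > 0" using i by (cases b) auto
  have "(tensor_one b M * Y) $$ (i,j) = (\<Sum>s<a*b. tensor_one b M $$ (i,s) * Y $$ (s,j))"
    using M Y i j by (simp add: scalar_prod_def atLeast0LessThan)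
  also have "\<dots> = (\<Sum>r<a. \<Sum>l<b. tensor_one b M $$ (i, r*b + l) * Y $$ (r*b + l, j))"
    by (rule sum_lessThan_mult_split)
  also have "\<dots> = (\<Sum>r<a. \<Sum>l<b. if l = i mod b then M $$ (i div b, r) * Y $$ (r*b + i mod b, j) else 0)"
    using M i b by (intro sum.cong refl) (auto simp: tensor_one_index mult_add_lt_mult)
  also have "\<dots> = (\<Sum>r<a. M $$ (i div b, r) * Y $$ (r*b + i mod b, j))"
    using b by (simp add: sum.delta')
  finally show ?thesis .
qed

lemma tensor_one_mult:
  assumes A: "A \<in> carrier_mat a a" and B: "B \<in> carrier_mat a a"
  shows "tensor_one b (A * B) = tensor_one b A * tensor_one b B"
proof (rule eq_matI)
  fix i j assume "i < dim_row (tensor_one b A * tensor_one b B)" "j < dim_col (tensor_one b A * tensor_one b B)"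
  then have i: "i < a*b" and j: "j < a*b" using A B by auto
  have b: "b > 0" using i by (cases b) auto
  then have row: "r*b + i mod b < a*b" if "r < a" for r
    using that by (intro mult_add_lt_mult) auto
  have "(tensor_one b A * tensor_one b B) $$ (i,j)
      = (\<Sum>r<a. A $$ (i div b, r) * tensor_one b B $$ (r*b + i mod b, j))"
    using tensor_one_mult_index[OF A _ i j] B by simp
  also have "\<dots> = (\<Sum>r<a. A $$ (i div b, r) * (if i mod b = j mod b then B $$ (r, j div b) else 0))"
    using b by (intro sum.cong refl) (simp add: tensor_one_index[OF B row j])
  also have "\<dots> = tensor_one b (A * B) $$ (i,j)"
    using tensor_one_index[of "A * B" a i b j] A B i j
    by (auto simp: scalar_prod_def lessThan_atLeast0 less_mult_imp_div_less)
  finally show "tensor_one b (A * B) $$ (i,j) = (tensor_one b A * tensor_one b B) $$ (i,j)" ..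
qed (use A B in auto)

lemma tensor_one_one: "tensor_one b (1\<^sub>m a) = 1\<^sub>m (a*b)"
proof (rule eq_matI)
  fix i j assume "i < dim_row (1\<^sub>m (a*b) :: complex mat)" "j < dim_col (1\<^sub>m (a*b) :: complex mat)"
  then have i: "i < a*b" and j: "j < a*b" by auto
  have "i = j \<longleftrightarrow> i div b = j div b \<and> i mod b = j mod b"
    by (metis div_mult_mod_eq)
  then show "tensor_one b (1\<^sub>m a) $$ (i,j) = 1\<^sub>m (a*b) $$ (i,j)"
    using tensor_one_index[of "1\<^sub>m a" a i b j] i j by (auto simp: less_mult_imp_div_less)
qed auto

lemma tensor_one_adj:
  assumes A: "A \<in> carrier_mat a a"
  shows "adj (tensor_one b A) = tensor_one b (adj A)"
proof (rule eq_matI)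
  fix i j assume "i < dim_row (tensor_one b (adj A))" "j < dim_col (tensor_one b (adj A))"
  then have i: "i < a*b" and j: "j < a*b" using A by auto
  show "adj (tensor_one b A) $$ (i,j) = tensor_one b (adj A) $$ (i,j)"
    using tensor_one_index[OF A j i] tensor_one_index[of "adj A" a i b j] A i j
    by (auto simp: less_mult_imp_div_less)
qed (use A in auto)

lemma msum_dim [simp]: "dim_row (msum r c F f) = r" "dim_col (msum r c F f) = c"
  by (auto simp: msum_def)

lemma msum_index [simp]: "i < r \<Longrightarrow> j < c \<Longrightarrow> msum r c F f $$ (i,j) = (\<Sum>k\<in>F. f k $$ (i,j))"
  by (auto simp: msum_def)

lemma msum_cong: "(\<And>k. k \<in> F \<Longrightarrow> f k = g k) \<Longrightarrow> msum r c F f = msum r c F g"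
  by (auto simp: msum_def)

lemma msum_eq_single:
  assumes "finite F" "i \<in> F" "f i \<in> carrier_mat r c" and "\<And>j. j \<in> F \<Longrightarrow> j \<noteq> i \<Longrightarrow> f j = 0\<^sub>m r c"
  shows "msum r c F f = f i"
proof (rule eq_matI)
  fix x y assume "x < dim_row (f i)" "y < dim_col (f i)"
  with assms show "msum r c F f $$ (x,y) = f i $$ (x,y)"
    by (auto simp: sum.remove[OF assms(1,2)] intro!: sum.neutral)
qed (use assms in auto)

lemma mult_msum:
  assumes A: "A \<in> carrier_mat r' r" and f: "\<And>k. k \<in> F \<Longrightarrow> f k \<in> carrier_mat r c"
  shows "A * msum r c F f = msum r' c F (\<lambda>k. A * f k)"
proof (rule eq_matI)
  fix i j assume "i < dim_row (msum r' c F (\<lambda>k. A * f k))" "j < dim_col (msum r' c F (\<lambda>k. A * f k))"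
  then have i: "i < r'" and j: "j < c" by (auto simp: msum_def)
  have "(A * msum r c F f) $$ (i,j) = (\<Sum>l<r. A $$ (i,l) * (\<Sum>k\<in>F. f k $$ (l,j)))"
    using A i j by (simp add: scalar_prod_def lessThan_atLeast0)
  also have "\<dots> = (\<Sum>k\<in>F. \<Sum>l<r. A $$ (i,l) * f k $$ (l,j))"
    by (simp add: sum_distrib_left sum.swap[of _ F])
  also have "\<dots> = (\<Sum>k\<in>F. (A * f k) $$ (i,j))"
  proof (rule sum.cong[OF refl])
    fix k assume "k \<in> F"
    then show "(\<Sum>l<r. A $$ (i,l) * f k $$ (l,j)) = (A * f k) $$ (i,j)"
      using f[of k] A i j by (auto simp: scalar_prod_def lessThan_atLeast0)
  qed
  finally show "(A * msum r c F f) $$ (i,j) = msum r' c F (\<lambda>k. A * f k) $$ (i,j)"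
    using i j by simp
qed (use A in \<open>auto simp: msum_def\<close>)

section \<open>Compressions of the strictly local algebra\<close>

lemma stloc_iff:
  "A \<in> stloc n a b X \<longleftrightarrow> A \<in> carrier_mat n n \<and>
     (\<exists>At \<in> carrier_mat a a. A * adj X = adj X * tensor_one b At \<and> X * A = tensor_one b At * X)"
  by (auto simp: stloc_on_def)

lemma one_mem_stloc:
  assumes "X \<in> carrier_mat (a*b) n"
  shows "1\<^sub>m n \<in> stloc n a b X"
  unfolding stloc_iff using assms by (auto simp: tensor_one_one intro!: bexI[of _ "1\<^sub>m a"])

lemma stloc_mult_closed:
  assumes X: "X \<in> carrier_mat (a*b) n" and A: "A \<in> stloc n a b X" and B: "B \<in> stloc n a b X"
  shows "A * B \<in> stloc n a b X"
proof -
  obtain At where A': "A \<in> carrier_mat n n" "At \<in> carrier_mat a a"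
    and A1: "A * adj X = adj X * tensor_one b At" and A2: "X * A = tensor_one b At * X"
    using A unfolding stloc_iff by blast
  obtain Bt where B': "B \<in> carrier_mat n n" "Bt \<in> carrier_mat a a"
    and B1: "B * adj X = adj X * tensor_one b Bt" and B2: "X * B = tensor_one b Bt * X"
    using B unfolding stloc_iff by blast
  note carriers = X A' B' adj_carrier[OF X]
  then have d: "dim_row A = n" "dim_col A = n" "dim_row B = n" "dim_col B = n"
    "dim_row (adj X) = n" "dim_col (adj X) = a*b" "dim_row X = a*b" "dim_col X = n"
    "dim_row At = a" "dim_col At = a" "dim_row Bt = a" "dim_col Bt = a" by auto
  have "A * B * adj X = (A * adj X) * tensor_one b Bt"
    by (simp add: mult_assoc_dim d B1)
  also have "\<dots> = adj X * tensor_one b (At * Bt)"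
    using carriers by (simp add: mult_assoc_dim d A1 tensor_one_mult)
  finally have "A * B * adj X = adj X * tensor_one b (At * Bt)" .
  moreover have "X * (A * B) = tensor_one b (At * Bt) * X"
  proof -
    have "X * (A * B) = tensor_one b At * (X * B)"
      by (simp add: mult_assoc_dim[symmetric] d A2)
    also have "\<dots> = tensor_one b (At * Bt) * X"
      using carriers by (simp add: mult_assoc_dim d B2 tensor_one_mult)
    finally show ?thesis .
  qed
  ultimately show ?thesis
    unfolding stloc_iff using carriers by (blast intro: mult_carrier_mat)
qed

lemma centre_mult_closed:
  assumes S: "S \<subseteq> carrier_mat n n" and mult: "\<And>A B. A \<in> S \<Longrightarrow> B \<in> S \<Longrightarrow> A * B \<in> S"
    and Y: "Y \<in> centre S" and Z: "Z \<in> centre S"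
  shows "Y * Z \<in> centre S"
proof -
  have YS: "Y \<in> S" and ZS: "Z \<in> S" using Y Z unfolding centre_def by auto
  have assoc: "A * B * C = A * (B * C)" if "A \<in> S" "B \<in> S" "C \<in> S" for A B C
    using that S by (intro assoc_mult_mat[of _ n n _ n _ n]) auto
  have "Y * Z * B = B * (Y * Z)" if B: "B \<in> S" for B
  proof -
    have "Y * Z * B = Y * (B * Z)" using assoc[OF YS ZS B] Z B unfolding centre_def by simp
    also have "\<dots> = B * (Y * Z)"
      using assoc[OF YS B ZS] assoc[OF B YS ZS] Y B unfolding centre_def by simp
    finally show ?thesis .
  qed
  then show ?thesis using mult[OF YS ZS] unfolding centre_def by blast
qed

lemma centre_compress:
  assumes S: "S \<subseteq> carrier_mat n n" and mult: "\<And>A B. A \<in> S \<Longrightarrow> B \<in> S \<Longrightarrow> A * B \<in> S"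
    and P: "P \<in> centre S" and PP: "P * P = P"
  shows "centre {P * A | A. A \<in> S} = {P * Z | Z. Z \<in> centre S}"
proof (intro equalityI subsetI)
  have PS: "P \<in> S" and comm: "\<And>B. B \<in> S \<Longrightarrow> P * B = B * P"
    using P unfolding centre_def by auto
  have assoc: "A * B * C = A * (B * C)" if "A \<in> S" "B \<in> S" "C \<in> S" for A B C
    using that S by (intro assoc_mult_mat[of _ n n _ n _ n]) auto
  fix W assume "W \<in> centre {P * A | A. A \<in> S}"
  then obtain A where A: "A \<in> S" and W: "W = P * A"
    and Wc: "\<And>B. B \<in> S \<Longrightarrow> W * (P * B) = (P * B) * W"
    unfolding centre_def by blast
  have WS: "W \<in> S" using mult[OF PS A] W by simp
  have PW: "P * W = W"
    using assoc[OF PS PS A] by (simp add: W PP)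
  have WP: "W * P = W"
    using assoc[OF PS A PS] assoc[OF PS PS A] by (simp add: W comm[OF A] PP)
  have "W * B = B * W" if B: "B \<in> S" for B
  proof -
    have "W * B = W * (P * B)" using assoc[OF WS PS B] by (simp add: WP)
    also have "\<dots> = (B * P) * W" using Wc[OF B] by (simp add: comm[OF B])
    also have "\<dots> = B * W" using assoc[OF B PS WS] by (simp add: PW)
    finally show ?thesis .
  qed
  then have "W \<in> centre S" using WS unfolding centre_def by blast
  then show "W \<in> {P * Z | Z. Z \<in> centre S}" using PW by (auto intro!: exI[of _ W])
next
  fix W assume "W \<in> {P * Z | Z. Z \<in> centre S}"
  then obtain Z where Z: "Z \<in> centre S" and W: "W = P * Z" by blast
  have "W \<in> centre S" unfolding W by (rule centre_mult_closed[OF S mult P Z])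
  then show "W \<in> centre {P * A | A. A \<in> S}"
    using W Z mult P unfolding centre_def by blast
qed

lemma compression_absorbs_proj:
  assumes P: "is_proj n P" and A: "A \<in> carrier_mat n n" and PAP: "P * A * P = A"
  shows "P * A = A" "A * P = A"
proof -
  have PP: "P * P = P" and d: "dim_row P = n" "dim_col P = n" "dim_row A = n" "dim_col A = n"
    using P A unfolding is_proj_def by auto
  have "P * A = (P * P) * A * P" by (subst PAP[symmetric]) (simp add: mult_assoc_dim d)
  then show "P * A = A" by (simp add: PP PAP)
  have "A * P = P * A * (P * P)" by (subst PAP[symmetric]) (simp add: mult_assoc_dim d)
  then show "A * P = A" by (simp add: PP PAP)
qed

lemma stloc_on_compress_subset:
  assumes X: "X \<in> carrier_mat (a*b) n" and P: "is_proj n P" and PS: "P \<in> stloc n a b X"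
    and A: "A \<in> stloc_on n a b P (X * P)"
  shows "A \<in> stloc n a b X" and "P * A = A"
proof -
  obtain T where T: "T \<in> carrier_mat a a" and T1: "P * adj X = adj X * tensor_one b T"
    and T2: "X * P = tensor_one b T * X"
    using PS unfolding stloc_iff by blast
  obtain At where Ac: "A \<in> carrier_mat n n" and PAP: "P * A * P = A" and At: "At \<in> carrier_mat a a"
    and A1: "A * adj (X * P) = adj (X * P) * tensor_one b At"
    and A2: "X * P * A = tensor_one b At * (X * P)"
    using A unfolding stloc_on_def by blast
  have Pc: "P \<in> carrier_mat n n" and PH: "adj P = P" and PP: "P * P = P"
    using P unfolding is_proj_def by auto
  have d: "dim_row X = a*b" "dim_col X = n" "dim_row P = n" "dim_col P = n" "dim_row T = a"
    "dim_col T = a" "dim_row A = n" "dim_col A = n" "dim_row At = a" "dim_col At = a"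
    using X Pc T Ac At by auto
  have A1': "A * (P * adj X) = P * adj X * tensor_one b At"
    using A1 adj_mult_hermitian[OF X Pc PH] by simp
  have AP: "A * P = A" and PA: "P * A = A"
    using compression_absorbs_proj[OF P Ac PAP] by auto
  show "P * A = A" by (rule PA)
  \<comment> \<open>T * At * T witnesses the locality of A with respect to X\<close>
  have KT: "tensor_one b (T * At * T) = tensor_one b T * tensor_one b At * tensor_one b T"
    using tensor_one_mult[OF mult_carrier_mat[OF T At] T] tensor_one_mult[OF T At] by simp
  have g1: "adj X * tensor_one b (T * At * T) = A * adj X"
  proof -
    have "adj X * tensor_one b (T * At * T) = (adj X * tensor_one b T) * tensor_one b At * tensor_one b T"
      unfolding KT by (simp add: mult_assoc_dim d)
    also have "\<dots> = (A * (P * adj X)) * tensor_one b T"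
      by (simp only: T1[symmetric] A1')
    also have "\<dots> = A * P * (adj X * tensor_one b T)"
      by (simp add: mult_assoc_dim d)
    also have "\<dots> = A * (P * P) * adj X"
      by (simp add: mult_assoc_dim d T1[symmetric])
    finally show ?thesis by (simp add: PP AP)
  qed
  have g2: "tensor_one b (T * At * T) * X = X * A"
  proof -
    have "tensor_one b (T * At * T) * X = tensor_one b T * tensor_one b At * (tensor_one b T * X)"
      unfolding KT by (simp add: mult_assoc_dim d)
    also have "\<dots> = tensor_one b T * (X * P * A)"
      by (simp add: mult_assoc_dim d T2[symmetric] A2)
    also have "\<dots> = (tensor_one b T * X) * P * A"
      by (simp add: mult_assoc_dim d)
    also have "\<dots> = X * (P * P) * A"
      by (simp add: mult_assoc_dim d T2[symmetric])
    finally show ?thesis by (simp add: PP PA mult_assoc_dim d)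
  qed
  show "A \<in> stloc n a b X"
    unfolding stloc_iff using Ac mult_carrier_mat[OF mult_carrier_mat[OF T At] T] g1[symmetric] g2[symmetric]
    by blast
qed

lemma compress_mem_stloc_on:
  assumes X: "X \<in> carrier_mat (a*b) n" and P: "is_proj n P"
    and B: "B \<in> stloc n a b X" and comm: "P * B = B * P"
  shows "P * B \<in> stloc_on n a b P (X * P)"
proof -
  obtain Bt where Bc: "B \<in> carrier_mat n n" and Bt: "Bt \<in> carrier_mat a a"
    and B1: "B * adj X = adj X * tensor_one b Bt" and B2: "X * B = tensor_one b Bt * X"
    using B unfolding stloc_iff by blast
  have Pc: "P \<in> carrier_mat n n" and PH: "adj P = P" and PP: "P * P = P"
    using P unfolding is_proj_def by auto
  have d: "dim_row X = a*b" "dim_col X = n" "dim_row P = n" "dim_col P = n"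
    "dim_row B = n" "dim_col B = n" "dim_row Bt = a" "dim_col Bt = a"
    using X Pc Bc Bt by auto
  have "P * (P * B) * P = P * B"
  proof -
    have "P * (P * B) * P = (P * P) * (B * P)" by (simp add: mult_assoc_dim d)
    also have "\<dots> = P * (P * B)" using PP comm by simp
    also have "\<dots> = P * B" using PP by (simp add: mult_assoc_dim[symmetric] d)
    finally show ?thesis .
  qed
  moreover have "P * B * (P * adj X) = P * adj X * tensor_one b Bt"
  proof -
    have "P * B * (P * adj X) = P * (B * P) * adj X" by (simp add: mult_assoc_dim d)
    also have "\<dots> = P * (P * B) * adj X" using comm by simp
    also have "\<dots> = (P * P) * (B * adj X)" by (simp add: mult_assoc_dim d)
    also have "\<dots> = P * (adj X * tensor_one b Bt)" using PP B1 by simp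
    also have "\<dots> = P * adj X * tensor_one b Bt" by (simp add: mult_assoc_dim d)
    finally show ?thesis .
  qed
  moreover have "X * P * (P * B) = tensor_one b Bt * (X * P)"
  proof -
    have "X * P * (P * B) = X * (P * P) * B" by (simp add: mult_assoc_dim d)
    also have "\<dots> = X * (B * P)" using PP comm by (simp add: mult_assoc_dim d)
    also have "\<dots> = (X * B) * P" by (simp add: mult_assoc_dim d)
    also have "\<dots> = tensor_one b Bt * (X * P)" using B2 by (simp add: mult_assoc_dim d)
    finally show ?thesis .
  qed
  ultimately show ?thesis
    unfolding stloc_on_def adj_mult_hermitian[OF X Pc PH] using Pc Bc Bt by auto
qed

lemma stloc_on_compress:
  assumes X: "X \<in> carrier_mat (a*b) n" and P: "is_proj n P" and central: "P \<in> centre (stloc n a b X)"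
  shows "stloc_on n a b P (X * P) = {P * A | A. A \<in> stloc n a b X}"
proof (intro equalityI subsetI)
  have PS: "P \<in> stloc n a b X" using central unfolding centre_def by blast
  fix A assume "A \<in> stloc_on n a b P (X * P)"
  then show "A \<in> {P * A | A. A \<in> stloc n a b X}"
    using stloc_on_compress_subset[OF X P PS] by (metis (mono_tags, lifting) mem_Collect_eq)
next
  fix A assume "A \<in> {P * A | A. A \<in> stloc n a b X}"
  then show "A \<in> stloc_on n a b P (X * P)"
    using compress_mem_stloc_on[OF X P] central unfolding centre_def by blast
qed

section \<open>Atomic projectors\<close>

lemma smult_mat_zero_left: "A \<in> carrier_mat r c \<Longrightarrow> (0 :: 'a :: mult_zero) \<cdot>\<^sub>m A = 0\<^sub>m r c"
  by (intro eq_matI) auto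

lemma smult_mat_one_left [simp]: "(1 :: 'a :: monoid_mult) \<cdot>\<^sub>m A = A"
  by (intro eq_matI) auto

lemma nonzero_mat_entry:
  assumes "A \<in> carrier_mat r c" "A \<noteq> 0\<^sub>m r c"
  obtains i j where "i < r" "j < c" "A $$ (i,j) \<noteq> 0"
proof -
  have "\<exists>i j. i < r \<and> j < c \<and> A $$ (i,j) \<noteq> 0"
    using assms by (auto intro!: eq_matI)
  then show ?thesis using that by blast
qed

context
  fixes n :: nat and Z :: "complex mat set" and I :: "'i set" and p :: "'i \<Rightarrow> complex mat"
  assumes atomic: "atomic_projectors n Z I p"
begin

lemma atomic_projector_carrier: "i \<in> I \<Longrightarrow> p i \<in> carrier_mat n n"
  using atomic unfolding atomic_projectors_def by blast

lemma atomic_projector_mult: "i \<in> I \<Longrightarrow> j \<in> I \<Longrightarrow> p i * p j = (if i = j then p i else 0\<^sub>m n n)"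
  using atomic unfolding atomic_projectors_def by blast

lemma atomic_projector_is_proj: "i \<in> I \<Longrightarrow> is_proj n (p i)"
  using atomic atomic_projector_mult[of i i] unfolding atomic_projectors_def is_proj_def by auto

lemma atomic_projector_mult_msum:
  assumes i: "i \<in> I"
  shows "p i * msum n n I (\<lambda>j. c j \<cdot>\<^sub>m p j) = c i \<cdot>\<^sub>m p i"
proof -
  have "p i * msum n n I (\<lambda>j. c j \<cdot>\<^sub>m p j) = msum n n I (\<lambda>j. p i * (c j \<cdot>\<^sub>m p j))"
    using i by (intro mult_msum) (auto simp: atomic_projector_carrier)
  also have "\<dots> = msum n n I (\<lambda>j. if j = i then c i \<cdot>\<^sub>m p i else 0\<^sub>m n n)"
    using i by (intro msum_cong)
      (auto simp: mult_smult_distrib[of _ n n _ n] atomic_projector_carrier atomic_projector_mult)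
  also have "\<dots> = c i \<cdot>\<^sub>m p i"
    using atomic i by (subst msum_eq_single[where i = i])
      (auto simp: atomic_projectors_def atomic_projector_carrier)
  finally show ?thesis .
qed

lemma atomic_projector_smult_mem:
  assumes i: "i \<in> I"
  shows "c \<cdot>\<^sub>m p i \<in> Z"
proof -
  have "msum n n I (\<lambda>j. (if j = i then c else 0) \<cdot>\<^sub>m p j) = c \<cdot>\<^sub>m p i"
    using atomic i by (subst msum_eq_single[where i = i])
      (auto simp: atomic_projectors_def atomic_projector_carrier smult_mat_zero_left)
  then show ?thesis
    using atomic unfolding atomic_projectors_def by (auto intro!: exI[of _ "\<lambda>j. if j = i then c else 0"])
qed

lemma atomic_projector_mem: "i \<in> I \<Longrightarrow> p i \<in> Z"
  using atomic_projector_smult_mem[of i 1] by simp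

lemma atomic_projectors_sum:
  assumes one: "1\<^sub>m n \<in> Z"
  shows "msum n n I p = 1\<^sub>m n"
proof -
  obtain c where c: "1\<^sub>m n = msum n n I (\<lambda>i. c i \<cdot>\<^sub>m p i)"
    using atomic one unfolding atomic_projectors_def by blast
  have "c i = 1" if i: "i \<in> I" for i
  proof -
    have eq: "c i \<cdot>\<^sub>m p i = p i"
      using atomic_projector_mult_msum[OF i, of c] c[symmetric] atomic_projector_carrier[OF i] by simp
    obtain x y where xy: "x < n" "y < n" and nz: "p i $$ (x,y) \<noteq> 0"
      using atomic i atomic_projector_carrier[OF i] nonzero_mat_entry
      unfolding atomic_projectors_def by blast
    have "c i * p i $$ (x,y) = p i $$ (x,y)"
      using arg_cong[OF eq, of "\<lambda>M. M $$ (x,y)"] xy atomic_projector_carrier[OF i] by simp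
    then show ?thesis using nz by simp
  qed
  then have "msum n n I p = msum n n I (\<lambda>i. c i \<cdot>\<^sub>m p i)"
    by (intro msum_cong) simp
  then show ?thesis using c by simp
qed

lemma atomic_projector_compress:
  assumes i: "i \<in> I"
  shows "{p i * W | W. W \<in> Z} = {c \<cdot>\<^sub>m p i | c. True}"
proof (intro equalityI subsetI)
  fix V assume "V \<in> {p i * W | W. W \<in> Z}"
  then show "V \<in> {c \<cdot>\<^sub>m p i | c. True}"
    using atomic atomic_projector_mult_msum[OF i] unfolding atomic_projectors_def by blast
next
  fix V assume "V \<in> {c \<cdot>\<^sub>m p i | c. True}"
  then obtain c where V: "V = c \<cdot>\<^sub>m p i" by blast
  have "p i * (c \<cdot>\<^sub>m p i) = c \<cdot>\<^sub>m p i"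
    using atomic_projector_carrier[OF i] atomic_projector_mult[OF i i]
    by (simp add: mult_smult_distrib[of _ n n _ n])
  then show "V \<in> {p i * W | W. W \<in> Z}"
    using atomic_projector_smult_mem[OF i, of c] V by (auto intro!: exI[of _ "c \<cdot>\<^sub>m p i"])
qed

end

lemma compress_atomic_is_factor:
  assumes S: "S \<subseteq> carrier_mat n n" and mult: "\<And>A B. A \<in> S \<Longrightarrow> B \<in> S \<Longrightarrow> A * B \<in> S"
    and atomic: "atomic_projectors n (centre S) I p" and i: "i \<in> I"
  shows "is_factor (p i) {p i * A | A. A \<in> S}"
proof -
  have "p i * p i = p i" using atomic_projector_mult[OF atomic i i] by simp
  then show ?thesis
    using centre_compress[OF S mult atomic_projector_mem[OF atomic i]] atomic_projector_compress[OF atomic i]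
    unfolding is_factor_def by simp
qed

section \<open>Orthogonal projectors onto ranges\<close>

lemma cscalar_prod_adj:
  assumes A: "A \<in> carrier_mat r c" and x: "x \<in> carrier_vec c" and y: "y \<in> carrier_vec r"
  shows "(A *\<^sub>v x) \<bullet>c y = x \<bullet>c (adj A *\<^sub>v y)"
proof -
  have "(A *\<^sub>v x) \<bullet>c y = (\<Sum>i<r. (\<Sum>k<c. A $$ (i,k) * x $ k) * cnj (y $ i))"
    using A x y by (simp add: scalar_prod_def atLeast0LessThan)
  also have "\<dots> = (\<Sum>k<c. x $ k * cnj (\<Sum>i<r. cnj (A $$ (i,k)) * y $ i))"
    by (simp add: sum_distrib_left sum_distrib_right sum.swap[of _ "{..<c}"] algebra_simps)
  also have "\<dots> = x \<bullet>c (adj A *\<^sub>v y)"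
    using A x y by (simp add: scalar_prod_def atLeast0LessThan)
  finally show ?thesis .
qed

lemma cscalar_prod_hermitian:
  assumes "Q \<in> carrier_mat a a" "adj Q = Q" "x \<in> carrier_vec a" "y \<in> carrier_vec a"
  shows "(Q *\<^sub>v x) \<bullet>c y = x \<bullet>c (Q *\<^sub>v y)"
  using cscalar_prod_adj[OF assms(1,3,4)] assms(2) by simp

lemma cscalar_prod_minus_right:
  fixes u v w :: "complex vec"
  shows "u \<in> carrier_vec a \<Longrightarrow> v \<in> carrier_vec a \<Longrightarrow> w \<in> carrier_vec a \<Longrightarrow> u \<bullet>c (v - w) = u \<bullet>c v - u \<bullet>c w"
  by (simp add: scalar_prod_def sum_subtractf algebra_simps)

lemma cscalar_prod_minus_left:
  fixes u v w :: "complex vec"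
  shows "u \<in> carrier_vec a \<Longrightarrow> v \<in> carrier_vec a \<Longrightarrow> w \<in> carrier_vec a \<Longrightarrow> (u - v) \<bullet>c w = u \<bullet>c w - v \<bullet>c w"
  by (simp add: scalar_prod_def sum_subtractf algebra_simps)

lemma cscalar_prod_swap: "u \<in> carrier_vec a \<Longrightarrow> v \<in> carrier_vec a \<Longrightarrow> v \<bullet>c u = cnj (u \<bullet>c v)"
  by (simp add: scalar_prod_def mult.commute)

definition rank_one :: "complex vec \<Rightarrow> complex mat" where
  "rank_one r = mat (dim_vec r) (dim_vec r) (\<lambda>(i,j). r $ i * cnj (r $ j))"

lemma rank_one_carrier [simp]: "r \<in> carrier_vec a \<Longrightarrow> rank_one r \<in> carrier_mat a a"
  by (auto simp: rank_one_def)

lemma rank_one_mult_vec: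
  "r \<in> carrier_vec a \<Longrightarrow> x \<in> carrier_vec a \<Longrightarrow> rank_one r *\<^sub>v x = (x \<bullet>c r) \<cdot>\<^sub>v r"
  by (intro eq_vecI) (auto simp: rank_one_def scalar_prod_def sum_distrib_left algebra_simps)

lemma rank_one_adj: "r \<in> carrier_vec a \<Longrightarrow> adj (rank_one r) = rank_one r"
  by (intro eq_matI) (auto simp: rank_one_def)

lemma rank_one_mult_rank_one: "r \<in> carrier_vec a \<Longrightarrow> rank_one r * rank_one r = (r \<bullet>c r) \<cdot>\<^sub>m rank_one r"
  by (intro eq_matI) (auto simp: rank_one_def scalar_prod_def sum_distrib_left sum_distrib_right algebra_simps)

lemma mult_rank_one_eq_zero:
  assumes Q: "Q \<in> carrier_mat a a" and r: "r \<in> carrier_vec a" and Qr: "Q *\<^sub>v r = 0\<^sub>v a"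
  shows "Q * rank_one r = 0\<^sub>m a a"
proof (rule eq_matI)
  fix i j assume "i < dim_row (0\<^sub>m a a :: complex mat)" "j < dim_col (0\<^sub>m a a :: complex mat)"
  then have i: "i < a" and j: "j < a" by auto
  have "(Q * rank_one r) $$ (i,j) = (Q *\<^sub>v r) $ i * cnj (r $ j)"
    using Q r i j by (simp add: rank_one_def scalar_prod_def sum_distrib_left sum_distrib_right mult_ac)
  then show "(Q * rank_one r) $$ (i,j) = 0\<^sub>m a a $$ (i,j)" using Qr i j by simp
qed (use Q r in \<open>auto simp: rank_one_def\<close>)

lemma is_proj_add_rank_one:
  assumes Q: "is_proj a Q" and r: "r \<in> carrier_vec a" "r \<noteq> 0\<^sub>v a" and Qr: "Q *\<^sub>v r = 0\<^sub>v a"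
  shows "is_proj a (Q + (1 / (r \<bullet>c r)) \<cdot>\<^sub>m rank_one r)"
proof -
  have Qc: "Q \<in> carrier_mat a a" and QH: "adj Q = Q" and QQ: "Q * Q = Q"
    using Q unfolding is_proj_def by auto
  define c where "c = r \<bullet>c r"
  have c: "c \<noteq> 0" "cnj c = c"
    using r cscalar_prod_swap[OF r(1) r(1)] by (auto simp: c_def)
  define R where "R = (1 / c) \<cdot>\<^sub>m rank_one r"
  have Rc: "R \<in> carrier_mat a a" using r by (simp add: R_def)
  have RH: "adj R = R" using c r by (simp add: R_def rank_one_adj)
  have QR: "Q * R = 0\<^sub>m a a"
    using mult_rank_one_eq_zero[OF Qc r(1) Qr] Qc r by (simp add: R_def mult_smult_distrib[of _ a a _ a])
  have RQ: "R * Q = 0\<^sub>m a a"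
    using adj_mult[OF Qc Rc] QR QH RH by simp
  have "R * R = (1 / c) \<cdot>\<^sub>m ((1 / c) \<cdot>\<^sub>m (c \<cdot>\<^sub>m rank_one r))"
    using r rank_one_mult_rank_one[OF r(1)]
    by (simp add: R_def c_def mult_smult_distrib[of _ a a _ a] mult_smult_assoc_mat[of _ a a _ a])
  also have "\<dots> = R"
    using c(1) by (intro eq_matI) (auto simp: R_def)
  finally have RR: "R * R = R" .
  have "(Q + R) * (Q + R) = Q * Q + R * Q + (Q * R + R * R)"
    using Qc Rc by (simp add: add_mult_distrib_mat[of _ a a _ _ a] mult_add_distrib_mat[of _ a a _ a])
  also have "\<dots> = Q + R" using Qc Rc QQ QR RQ RR by simp
  finally show ?thesis
    using Qc Rc QH RH adj_add[OF Qc Rc] unfolding is_proj_def R_def c_def by simp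
qed

lemma add_rank_one_mult_vec:
  assumes "Q \<in> carrier_mat a a" "r \<in> carrier_vec a" "y \<in> carrier_vec a"
  shows "(Q + k \<cdot>\<^sub>m rank_one r) *\<^sub>v y = Q *\<^sub>v y + (k * (y \<bullet>c r)) \<cdot>\<^sub>v r"
proof -
  have "(Q + k \<cdot>\<^sub>m rank_one r) *\<^sub>v y = Q *\<^sub>v y + (k \<cdot>\<^sub>m rank_one r) *\<^sub>v y"
    using assms by (intro add_mult_distrib_mat_vec) auto
  also have "(k \<cdot>\<^sub>m rank_one r) *\<^sub>v y = k \<cdot>\<^sub>v (rank_one r *\<^sub>v y)"
    using assms by (intro eq_vecI) (auto simp: rank_one_def)
  finally show ?thesis using assms by (simp add: rank_one_mult_vec smult_smult_assoc)
qed

definition span_projector :: "nat \<Rightarrow> complex vec list \<Rightarrow> complex mat \<Rightarrow> bool" where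
  "span_projector a us Q \<longleftrightarrow> is_proj a Q \<and> (\<forall>u \<in> set us. Q *\<^sub>v u = u) \<and>
     (\<forall>y \<in> carrier_vec a. (\<forall>u \<in> set us. y \<bullet>c u = 0) \<longrightarrow> Q *\<^sub>v y = 0\<^sub>v a)"

lemma span_projector_Cons_update:
  assumes Q: "span_projector a us Q" and u: "u \<in> carrier_vec a" and us: "set us \<subseteq> carrier_vec a"
    and r: "r = u - Q *\<^sub>v u" "r \<noteq> 0\<^sub>v a"
  shows "span_projector a (u # us) (Q + (1 / (r \<bullet>c r)) \<cdot>\<^sub>m rank_one r)"
proof -
  have Qc: "Q \<in> carrier_mat a a" and QH: "adj Q = Q" and QQ: "Q * Q = Q"
    and Qus: "\<forall>v \<in> set us. Q *\<^sub>v v = v"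
    and Qy: "\<forall>y \<in> carrier_vec a. (\<forall>v \<in> set us. y \<bullet>c v = 0) \<longrightarrow> Q *\<^sub>v y = 0\<^sub>v a"
    using Q unfolding span_projector_def is_proj_def by auto
  define c where "c = r \<bullet>c r"
  have rc: "r \<in> carrier_vec a" and Qu: "Q *\<^sub>v u \<in> carrier_vec a" using u Qc r by auto
  have c: "c \<noteq> 0" using r rc by (simp add: c_def)
  have Qr: "Q *\<^sub>v r = 0\<^sub>v a"
    using Qc u by (simp add: r mult_minus_distrib_mat_vec assoc_mult_mat_vec[symmetric, of Q a a Q] QQ)
  have Q'_vec: "(Q + (1 / c) \<cdot>\<^sub>m rank_one r) *\<^sub>v y = Q *\<^sub>v y + ((y \<bullet>c r) / c) \<cdot>\<^sub>v r"
    if "y \<in> carrier_vec a" for y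
    using add_rank_one_mult_vec[OF Qc rc that] by simp
  have "u \<bullet>c r - c = (Q *\<^sub>v u) \<bullet>c r"
    using cscalar_prod_minus_left[OF u Qu rc] by (simp add: c_def r)
  also have "\<dots> = 0"
    using cscalar_prod_hermitian[OF Qc QH u rc] Qr u by simp
  finally have ur: "u \<bullet>c r = c" by simp
  have "Q' *\<^sub>v v = v" if v: "v \<in> set (u # us)" and Q': "Q' = Q + (1 / c) \<cdot>\<^sub>m rank_one r" for v Q'
  proof (cases "v = u")
    case True
    have "Q' *\<^sub>v u = Q *\<^sub>v u + r" using Q'_vec[OF u] ur c Q' by simp
    also have "\<dots> = u" using u Qc by (intro eq_vecI) (auto simp: r)
    finally show ?thesis using True by simp
  next
    case False
    then have vus: "v \<in> set us" using v by simp
    then have vc: "v \<in> carrier_vec a" using us by auto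
    have "v \<bullet>c r = v \<bullet>c u - (Q *\<^sub>v v) \<bullet>c u"
      using cscalar_prod_hermitian[OF Qc QH vc u] cscalar_prod_minus_right[OF vc u Qu] by (simp add: r)
    then have "v \<bullet>c r = 0" using Qus vus by simp
    then have "Q' *\<^sub>v v = v + 0 \<cdot>\<^sub>v r" using Q'_vec[OF vc] Qus vus Q' by simp
    also have "\<dots> = v" using vc rc by (intro eq_vecI) auto
    finally show ?thesis .
  qed
  moreover have "(Q + (1 / c) \<cdot>\<^sub>m rank_one r) *\<^sub>v y = 0\<^sub>v a"
    if y: "y \<in> carrier_vec a" and orth: "\<forall>v \<in> set (u # us). y \<bullet>c v = 0" for y
  proof -
    have Qy0: "Q *\<^sub>v y = 0\<^sub>v a" using Qy y orth by simp
    have "y \<bullet>c r = - ((Q *\<^sub>v y) \<bullet>c u)"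
      using cscalar_prod_minus_right[OF y u Qu] cscalar_prod_hermitian[OF Qc QH y u] orth
      by (simp add: r)
    then have "y \<bullet>c r = 0" using Qy0 u by simp
    then show ?thesis using Q'_vec[OF y] Qy0 rc by auto
  qed
  moreover have "is_proj a (Q + (1 / c) \<cdot>\<^sub>m rank_one r)"
    unfolding c_def using Q rc r(2) Qr unfolding span_projector_def by (intro is_proj_add_rank_one) auto
  ultimately show ?thesis unfolding span_projector_def c_def by blast
qed

lemma orthogonal_projector_onto_span:
  assumes "set us \<subseteq> carrier_vec a"
  shows "\<exists>Q. span_projector a us Q"
  using assms
proof (induction us)
  case Nil
  show ?case by (intro exI[of _ "0\<^sub>m a a"]) (auto simp: span_projector_def is_proj_def)
next
  case (Cons u us)
  then have u: "u \<in> carrier_vec a" and us: "set us \<subseteq> carrier_vec a" by auto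
  obtain Q where Q: "span_projector a us Q" using Cons.IH[OF us] by blast
  show ?case
  proof (cases "Q *\<^sub>v u = u")
    case True
    then have "span_projector a (u # us) Q" using Q by (auto simp: span_projector_def)
    then show ?thesis by blast
  next
    case False
    have Qc: "Q \<in> carrier_mat a a" using Q unfolding span_projector_def is_proj_def by blast
    have "u - Q *\<^sub>v u \<noteq> 0\<^sub>v a"
    proof
      assume z: "u - Q *\<^sub>v u = 0\<^sub>v a"
      have "Q *\<^sub>v u = u"
      proof (rule eq_vecI)
        fix i assume "i < dim_vec u"
        then show "(Q *\<^sub>v u) $ i = u $ i" using arg_cong[OF z, of "\<lambda>v. v $ i"] u Qc by simp
      qed (use u Qc in simp)
      with False show False ..
    qed
    then show ?thesis using span_projector_Cons_update[OF Q u us refl] by blast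
  qed
qed

lemma orthogonal_projector_onto_range:
  assumes G: "G \<in> carrier_mat a m"
  shows "\<exists>Q. is_proj a Q \<and> Q * G = G \<and>
    (\<forall>k Z. Z \<in> carrier_mat a k \<longrightarrow> adj G * Z = 0\<^sub>m m k \<longrightarrow> Q * Z = 0\<^sub>m a k)"
proof -
  have cols: "set (cols G) \<subseteq> carrier_vec a" using G by (auto simp: cols_def)
  obtain Q where Q: "is_proj a Q" and Qcols: "\<forall>u \<in> set (cols G). Q *\<^sub>v u = u"
    and Qorth: "\<forall>y \<in> carrier_vec a. (\<forall>u \<in> set (cols G). y \<bullet>c u = 0) \<longrightarrow> Q *\<^sub>v y = 0\<^sub>v a"
    using orthogonal_projector_onto_span[OF cols] unfolding span_projector_def by blast
  have Qc: "Q \<in> carrier_mat a a" using Q unfolding is_proj_def by blast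
  have QG: "Q * G = G"
  proof (rule mat_col_eqI)
    fix j assume j: "j < dim_col G"
    then have "col G j \<in> set (cols G)" by (simp add: cols_def)
    then have "Q *\<^sub>v col G j = col G j" using Qcols by blast
    then show "col (Q * G) j = col G j" using col_mult2[OF Qc G] G j by simp
  qed (use Qc G in auto)
  have ker: "Q * Z = 0\<^sub>m a k" if Z: "Z \<in> carrier_mat a k" and GZ: "adj G * Z = 0\<^sub>m m k" for k Z
  proof (rule mat_col_eqI)
    fix l assume "l < dim_col (0\<^sub>m a k :: complex mat)"
    then have l: "l < k" by simp
    have orth: "col Z l \<bullet>c u = 0" if "u \<in> set (cols G)" for u
    proof -
      obtain j where j: "j < m" and u: "u = col G j"
        using \<open>u \<in> set (cols G)\<close> G by (auto simp: cols_def)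
      have "col Z l \<bullet>c u = (\<Sum>i = 0..<a. cnj (G $$ (i,j)) * Z $$ (i,l))"
        using G Z j l by (simp add: u scalar_prod_def mult.commute)
      also have "\<dots> = (adj G * Z) $$ (j, l)"
        using G Z j l by (simp add: scalar_prod_def)
      also have "\<dots> = 0"
        using GZ j l by simp
      finally show ?thesis .
    qed
    have "col Z l \<in> carrier_vec a" using col_carrier_vec[OF l Z] .
    then have "Q *\<^sub>v col Z l = 0\<^sub>v a" using Qorth orth by blast
    then show "col (Q * Z) l = col (0\<^sub>m a k) l" using col_mult2[OF Qc Z l] l by simp
  qed (use Qc Z in auto)
  show ?thesis using Q QG ker by blast
qed

lemma orthogonal_range_projectors:
  assumes G: "\<And>i. i \<in> I \<Longrightarrow> G i \<in> carrier_mat a m"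
    and orth: "\<And>i j. i \<in> I \<Longrightarrow> j \<in> I \<Longrightarrow> i \<noteq> j \<Longrightarrow> adj (G i) * G j = 0\<^sub>m m m"
  shows "\<exists>Q. (\<forall>i \<in> I. is_proj a (Q i) \<and> Q i * G i = G i) \<and>
    (\<forall>i \<in> I. \<forall>j \<in> I. i \<noteq> j \<longrightarrow> Q i * Q j = 0\<^sub>m a a)"
proof -
  have "\<forall>i \<in> I. \<exists>Q. is_proj a Q \<and> Q * G i = G i \<and>
      (\<forall>k Z. Z \<in> carrier_mat a k \<longrightarrow> adj (G i) * Z = 0\<^sub>m m k \<longrightarrow> Q * Z = 0\<^sub>m a k)"
    using orthogonal_projector_onto_range G by blast
  then obtain Q where "\<forall>i \<in> I. is_proj a (Q i) \<and> Q i * G i = G i \<and>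
      (\<forall>k Z. Z \<in> carrier_mat a k \<longrightarrow> adj (G i) * Z = 0\<^sub>m m k \<longrightarrow> Q i * Z = 0\<^sub>m a k)"
    by (auto dest: bchoice)
  then have Q: "\<And>i. i \<in> I \<Longrightarrow> is_proj a (Q i)" and QG: "\<And>i. i \<in> I \<Longrightarrow> Q i * G i = G i"
    and Qker: "\<And>i k Z. i \<in> I \<Longrightarrow> Z \<in> carrier_mat a k \<Longrightarrow> adj (G i) * Z = 0\<^sub>m m k \<Longrightarrow> Q i * Z = 0\<^sub>m a k"
    by blast+
  have QQ: "Q i * Q j = 0\<^sub>m a a" if i: "i \<in> I" and j: "j \<in> I" and ij: "i \<noteq> j" for i j
  proof -
    have Qjc: "Q j \<in> carrier_mat a a" and QjH: "adj (Q j) = Q j"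
      using Q[OF j] unfolding is_proj_def by auto
    have "Q j * G i = 0\<^sub>m a m" using Qker[OF j G[OF i] orth[OF j i]] ij by simp
    moreover have "adj (Q j * G i) = adj (G i) * Q j" using adj_mult[OF Qjc G[OF i]] QjH by simp
    ultimately have "adj (G i) * Q j = 0\<^sub>m m a" by simp
    then show ?thesis using Qker[OF i Qjc] by simp
  qed
  then show ?thesis using Q QG by blast
qed

section \<open>Left supports\<close>

(* Y :: (a*b) x n with the factor C^b moved from the output to the input side.  Then (M (x) 1) Y
   reshapes to M times the reshaped Y, so the least H <= C^a with range Y <= H (x) C^b is the
   column space of reshape_left a b Y. *)
definition reshape_left :: "nat \<Rightarrow> nat \<Rightarrow> complex mat \<Rightarrow> complex mat" where
  "reshape_left a b Y = mat a (dim_col Y * b) (\<lambda>(r,c). Y $$ (r*b + c mod b, c div b))"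

lemma reshape_left_dim [simp]:
  "dim_row (reshape_left a b Y) = a" "dim_col (reshape_left a b Y) = dim_col Y * b"
  by (auto simp: reshape_left_def)

lemma reshape_left_carrier [simp]: "Y \<in> carrier_mat x n \<Longrightarrow> reshape_left a b Y \<in> carrier_mat a (n*b)"
  by (auto simp: reshape_left_def)

lemma reshape_left_tensor_one_mult:
  assumes M: "M \<in> carrier_mat a a" and Y: "Y \<in> carrier_mat (a*b) n"
  shows "reshape_left a b (tensor_one b M * Y) = M * reshape_left a b Y"
proof (rule eq_matI)
  fix r c assume "r < dim_row (M * reshape_left a b Y)" "c < dim_col (M * reshape_left a b Y)"
  then have r: "r < a" and c: "c < n*b" using M Y by auto
  have b: "b > 0" using c by (cases b) auto
  have cb: "c div b < n" using c b by (simp add: less_mult_imp_div_less)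
  have rb: "r*b + c mod b < a*b" using r b by (intro mult_add_lt_mult) auto
  have "reshape_left a b (tensor_one b M * Y) $$ (r,c) = (tensor_one b M * Y) $$ (r*b + c mod b, c div b)"
    using r c M Y by (simp add: reshape_left_def)
  also have "\<dots> = (\<Sum>r'<a. M $$ (r, r') * Y $$ (r'*b + c mod b, c div b))"
    using tensor_one_mult_index[OF M Y rb cb] b by simp
  also have "\<dots> = (M * reshape_left a b Y) $$ (r,c)"
    using r c M Y by (simp add: reshape_left_def scalar_prod_def lessThan_atLeast0)
  finally show "reshape_left a b (tensor_one b M * Y) $$ (r,c) = (M * reshape_left a b Y) $$ (r,c)" .
qed (use M Y in \<open>auto simp: reshape_left_def\<close>)

lemma reshape_left_inj:
  assumes Y: "Y \<in> carrier_mat (a*b) n" and Y': "Y' \<in> carrier_mat (a*b) n"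
    and eq: "reshape_left a b Y = reshape_left a b Y'"
  shows "Y = Y'"
proof (rule eq_matI)
  fix s k assume "s < dim_row Y'" "k < dim_col Y'"
  then have s: "s < a*b" and k: "k < n" using Y' by auto
  have b: "b > 0" using s by (cases b) auto
  define c where "c = k*b + s mod b"
  have c: "c < n*b" unfolding c_def using k b by (intro mult_add_lt_mult) auto
  have r: "s div b < a" using s b by (simp add: less_mult_imp_div_less)
  have cm: "c mod b = s mod b" "c div b = k" using b by (auto simp: c_def)
  have "reshape_left a b Y $$ (s div b, c) = reshape_left a b Y' $$ (s div b, c)" using eq by simp
  then show "Y $$ (s,k) = Y' $$ (s,k)" using r c Y Y' cm by (simp add: reshape_left_def mult.commute)
qed (use Y Y' in auto)

lemma reshape_left_zero: "reshape_left a b (0\<^sub>m (a*b) n) = 0\<^sub>m a (n*b)"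
proof (rule eq_matI)
  fix r c assume "r < dim_row (0\<^sub>m a (n*b) :: complex mat)" "c < dim_col (0\<^sub>m a (n*b) :: complex mat)"
  then have r: "r < a" and c: "c < n*b" by auto
  have b: "b > 0" using c by (cases b) auto
  have "c div b < n" using c b by (simp add: less_mult_imp_div_less)
  moreover have "r*b + c mod b < a*b" using r b by (intro mult_add_lt_mult) auto
  ultimately show "reshape_left a b (0\<^sub>m (a*b) n) $$ (r,c) = 0\<^sub>m a (n*b) $$ (r,c)"
    using r c by (simp add: reshape_left_def)
qed (auto simp: reshape_left_def)

lemma stloc_hermitian_witness:
  assumes X: "X \<in> carrier_mat (a*b) n" and PS: "P \<in> stloc n a b X" and PH: "adj P = P"
  obtains T where "T \<in> carrier_mat a a" "tensor_one b T * X = X * P" "tensor_one b (adj T) * X = X * P"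
proof -
  obtain T where T: "T \<in> carrier_mat a a" and T1: "P * adj X = adj X * tensor_one b T"
    and T2: "X * P = tensor_one b T * X"
    using PS unfolding stloc_iff by blast
  have Pc: "P \<in> carrier_mat n n" using PS unfolding stloc_iff by blast
  have "tensor_one b (adj T) * X = adj (adj X * tensor_one b T)"
    using adj_mult[OF adj_carrier[OF X] tensor_one_carrier[OF T]] tensor_one_adj[OF T] by simp
  also have "\<dots> = X * P"
    using adj_mult[OF Pc adj_carrier[OF X]] PH by (simp add: T1[symmetric])
  finally have "tensor_one b (adj T) * X = X * P" .
  with T T2[symmetric] show ?thesis by (rule that)
qed

lemma intertwiner_mult_reshape_left:
  assumes X: "X \<in> carrier_mat (a*b) n" and T: "T \<in> carrier_mat a a"
    and TX: "tensor_one b T * X = X * P" and P: "P \<in> carrier_mat n n" and P': "P' \<in> carrier_mat n n"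
  shows "T * reshape_left a b (X * P') = reshape_left a b (X * (P * P'))"
proof -
  have "tensor_one b T * (X * P') = X * (P * P')"
    using assoc_mult_mat[OF tensor_one_carrier[OF T] X P', symmetric] assoc_mult_mat[OF X P P']
    by (simp add: TX)
  then show ?thesis
    using reshape_left_tensor_one_mult[OF T mult_carrier_mat[OF X P']] by simp
qed

lemma mat_range_subset_of_fixed:
  assumes "M \<in> carrier_mat r r" "Y \<in> carrier_mat r c" "M * Y = Y"
  shows "mat_range Y \<subseteq> mat_range M"
proof
  fix w assume "w \<in> mat_range Y"
  then obtain v where v: "v \<in> carrier_vec c" and w: "w = Y *\<^sub>v v"
    using assms(2) unfolding mat_range_def by auto
  have "w = M *\<^sub>v (Y *\<^sub>v v)" using assms v by (simp add: w assoc_mult_mat_vec[symmetric])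
  then show "w \<in> mat_range M" using assms v unfolding mat_range_def by auto
qed

lemma left_support_projectors:
  assumes X: "X \<in> carrier_mat (a*b) n"
    and P: "\<And>i. i \<in> I \<Longrightarrow> is_proj n (P i)"
    and orth: "\<And>i j. i \<in> I \<Longrightarrow> j \<in> I \<Longrightarrow> i \<noteq> j \<Longrightarrow> P i * P j = 0\<^sub>m n n"
    and loc: "\<And>i. i \<in> I \<Longrightarrow> P i \<in> stloc n a b X"
  shows "\<exists>Q. (\<forall>i \<in> I. is_proj a (Q i)) \<and> (\<forall>i \<in> I. \<forall>j \<in> I. i \<noteq> j \<longrightarrow> Q i * Q j = 0\<^sub>m a a) \<and>
    (\<forall>i \<in> I. mat_range (X * P i) \<subseteq> mat_range (tensor_one b (Q i)))"
proof -
  define G where "G i = reshape_left a b (X * P i)" for i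
  have Pc: "P i \<in> carrier_mat n n" and PH: "adj (P i) = P i" and PP: "P i * P i = P i" if "i \<in> I" for i
    using P[OF that] unfolding is_proj_def by auto
  have XP: "X * P i \<in> carrier_mat (a*b) n" if "i \<in> I" for i using X Pc[OF that] by simp
  have G: "G i \<in> carrier_mat a (n*b)" if "i \<in> I" for i unfolding G_def using XP[OF that] by simp
  have GG: "adj (G i) * G j = 0\<^sub>m (n*b) (n*b)" if i: "i \<in> I" and j: "j \<in> I" and ij: "i \<noteq> j" for i j
  proof -
    obtain T where T: "T \<in> carrier_mat a a" and T1: "tensor_one b T * X = X * P i"
      and T2: "tensor_one b (adj T) * X = X * P i"
      using stloc_hermitian_witness[OF X loc[OF i] PH[OF i]] by blast
    have "T * G i = G i"
      using intertwiner_mult_reshape_left[OF X T T1 Pc[OF i] Pc[OF i]] PP[OF i] by (simp add: G_def)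
    then have "adj (G i) = adj (G i) * adj T"
      using adj_mult[OF T G[OF i]] by simp
    moreover have "adj T * G j = 0\<^sub>m a (n*b)"
      using intertwiner_mult_reshape_left[OF X adj_carrier[OF T] T2 Pc[OF i] Pc[OF j]] orth[OF i j ij] X
      by (simp add: G_def reshape_left_zero)
    ultimately have "adj (G i) * G j = adj (G i) * 0\<^sub>m a (n*b)"
      using assoc_mult_mat[OF adj_carrier[OF G[OF i]] adj_carrier[OF T] G[OF j]] by simp
    then show ?thesis using G[OF i] by simp
  qed
  obtain Q where Q: "\<forall>i \<in> I. is_proj a (Q i) \<and> Q i * G i = G i"
    and QQ: "\<forall>i \<in> I. \<forall>j \<in> I. i \<noteq> j \<longrightarrow> Q i * Q j = 0\<^sub>m a a"
    using orthogonal_range_projectors[of I G a "n*b", OF G GG] by blast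
  have "mat_range (X * P i) \<subseteq> mat_range (tensor_one b (Q i))" if i: "i \<in> I" for i
  proof -
    have Qc: "Q i \<in> carrier_mat a a" using Q i unfolding is_proj_def by blast
    have "reshape_left a b (tensor_one b (Q i) * (X * P i)) = reshape_left a b (X * P i)"
      using reshape_left_tensor_one_mult[OF Qc XP[OF i]] Q i by (simp add: G_def)
    then have "tensor_one b (Q i) * (X * P i) = X * P i"
      using reshape_left_inj mult_carrier_mat[OF tensor_one_carrier[OF Qc] XP[OF i]] XP[OF i] by blast
    then show ?thesis using mat_range_subset_of_fixed[OF tensor_one_carrier[OF Qc] XP[OF i]] by blast
  qed
  then show ?thesis using Q QQ by blast
qed

lemma splitting_on_compress:
  assumes X: "splitting n a b X" and P: "is_proj n P"
  shows "splitting_on n a b P (X * P)"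
proof -
  have Xc: "X \<in> carrier_mat (a*b) n" and XX: "adj X * X = 1\<^sub>m n"
    using X unfolding splitting_on_def by auto
  have Pc: "P \<in> carrier_mat n n" and PH: "adj P = P" and PP: "P * P = P"
    using P unfolding is_proj_def by auto
  have "X * P * P = X * P" using assoc_mult_mat[OF Xc Pc Pc] PP by simp
  moreover have "adj (X * P) * (X * P) = P"
  proof -
    have "adj (X * P) * (X * P) = P * ((adj X * X) * P)"
      using Xc Pc by (simp add: adj_mult_hermitian[OF Xc Pc PH] mult_assoc_dim)
    then show ?thesis using XX Pc PP by simp
  qed
  ultimately show ?thesis using P Xc Pc unfolding splitting_on_def by simp
qed

theorem mainTheorem12:
  fixes n a b :: nat and chi :: "complex mat" and I :: "'i set" and p :: "'i \<Rightarrow> complex mat"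
  assumes "splitting n a b chi"
    and "atomic_projectors n (centre (stloc n a b chi)) I p"
  shows "(msum n n I p = 1\<^sub>m n \<and> (\<forall>i\<in>I. \<forall>j\<in>I. i \<noteq> j \<longrightarrow> p i * p j = 0\<^sub>m n n))
    \<and> (chi = msum (a*b) n I (\<lambda>i. chi * p i) \<and> chi = msum (a*b) n I (\<lambda>i. (chi * p i) * p i))
    \<and> (\<forall>i\<in>I. splitting_on n a b (p i) ((chi * p i) * p i))
    \<and> (\<forall>i\<in>I. stloc_on n a b (p i) ((chi * p i) * p i) = {p i * A | A. A \<in> stloc n a b chi}
              \<and> is_factor (p i) (stloc_on n a b (p i) ((chi * p i) * p i)))
    \<and> (\<exists>Q :: 'i \<Rightarrow> complex mat. (\<forall>i\<in>I. is_proj a (Q i)) \<and>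
           (\<forall>i\<in>I. \<forall>j\<in>I. i \<noteq> j \<longrightarrow> Q i * Q j = 0\<^sub>m a a) \<and>
           (\<forall>i\<in>I. mat_range (chi * p i) \<subseteq> mat_range (kron (Q i) (1\<^sub>m b))))"
proof -
  let ?S = "stloc n a b chi"
  note atomic = assms(2)
  have X: "chi \<in> carrier_mat (a*b) n" using assms(1) unfolding splitting_on_def by blast
  have S: "?S \<subseteq> carrier_mat n n" by (auto simp: stloc_iff)
  have mult: "\<And>A B. A \<in> ?S \<Longrightarrow> B \<in> ?S \<Longrightarrow> A * B \<in> ?S" by (rule stloc_mult_closed[OF X])
  have proj: "\<And>i. i \<in> I \<Longrightarrow> is_proj n (p i)" by (rule atomic_projector_is_proj[OF atomic])
  have orth: "\<And>i j. i \<in> I \<Longrightarrow> j \<in> I \<Longrightarrow> i \<noteq> j \<Longrightarrow> p i * p j = 0\<^sub>m n n"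
    using atomic_projector_mult[OF atomic] by simp
  have central: "\<And>i. i \<in> I \<Longrightarrow> p i \<in> centre ?S" by (rule atomic_projector_mem[OF atomic])
  have chi_p: "chi * p i * p i = chi * p i" if "i \<in> I" for i
    using assoc_mult_mat[OF X atomic_projector_carrier[OF atomic that] atomic_projector_carrier[OF atomic that]]
      atomic_projector_mult[OF atomic that that] by simp
  have "1\<^sub>m n \<in> centre ?S" using one_mem_stloc[OF X] S unfolding centre_def by auto
  then have sum: "msum n n I p = 1\<^sub>m n" by (rule atomic_projectors_sum[OF atomic])
  then have decomp: "chi = msum (a*b) n I (\<lambda>i. chi * p i)"
    using mult_msum[where F = I and f = p, OF X atomic_projector_carrier[OF atomic]] X by simp
  have local_alg: "stloc_on n a b (p i) (chi * p i) = {p i * A | A. A \<in> ?S}" if "i \<in> I" for i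
    by (rule stloc_on_compress[OF X proj[OF that] central[OF that]])
  have loc: "p i \<in> ?S" if "i \<in> I" for i using central[OF that] unfolding centre_def by blast
  have support: "\<exists>Q. (\<forall>i \<in> I. is_proj a (Q i)) \<and> (\<forall>i \<in> I. \<forall>j \<in> I. i \<noteq> j \<longrightarrow> Q i * Q j = 0\<^sub>m a a) \<and>
      (\<forall>i \<in> I. mat_range (chi * p i) \<subseteq> mat_range (kron (Q i) (1\<^sub>m b)))"
    by (rule left_support_projectors[where I = I and P = p, OF X proj orth loc])
  show ?thesis
    using sum orth decomp local_alg support compress_atomic_is_factor[OF S mult atomic]
      splitting_on_compress[OF assms(1) proj]
    by (simp add: chi_p cong: msum_cong)
qed

end
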